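(* Let $(G,+,\bullet)$ be an interchange near ring containing an annihilator, i.e. an element $a\in G$ with $a\bullet x = x\bullet a = a$ for every $x\in G$. Then $(G,\bullet)$ is a zero semigroup: in fact $x\bullet y = 0$ for all $x,y\in G$.
   Context: An interchange near ring is a triple $(G,+,\bullet)$ where $(G,+)$ is a group (written additively, not necessarily abelian, with identity $0$) and $\bullet$ is a binary operation on $G$ satisfying the interchange law $(w+x)\bullet(y+z) = (w\bullet y)+(x\bullet z)$ for all $w,x,y,z\in G$. A zero semigroup is a semigroup $(S,\cdot)$ satisfying $w\cdot x = y\cdot z$ for all $w,x,y,z\in S$. *)

theory Defs
  imports Main
begin

definition interchange_near_ring :: "('a::group_add \<Rightarrow> 'a \<Rightarrow> 'a) \<Rightarrow> bool" where
  "interchange_near_ring m \<longleftrightarrow>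
     (\<forall>w x y z. m (w + x) (y + z) = m w y + m x z)"

definition zero_semigroup :: "('a \<Rightarrow> 'a \<Rightarrow> 'a) \<Rightarrow> bool" where
  "zero_semigroup m \<longleftrightarrow>
     (\<forall>x y z. m (m x y) z = m x (m y z)) \<and> (\<forall>w x y z. m w x = m y z)"

end

theory Submission
  imports Defs
begin

(* In an interchange near ring every product splits along the
   decompositions x = x + 0 and y = 0 + y:  x \<bullet> y = x \<bullet> 0 + 0 \<bullet> y.
   Applied to x = y = a for an annihilator a this gives a = a + a, so a = 0.
   Once 0 is an annihilator, the splitting gives x \<bullet> y = 0 + 0 = 0 for all x, y,
   and a constantly zero operation is trivially an (associative) zero semigroup. *)

definition annihilator :: "('a \<Rightarrow> 'a \<Rightarrow> 'a) \<Rightarrow> 'a \<Rightarrow> bool" where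
  "annihilator m a \<longleftrightarrow> (\<forall>x. m a x = a \<and> m x a = a)"

lemma interchange_split:
  fixes m :: "'a::group_add \<Rightarrow> 'a \<Rightarrow> 'a"
  assumes "interchange_near_ring m"
  shows "m x y = m x 0 + m 0 y"
proof -
  have "m x y = m (x + 0) (0 + y)" by simp
  also have "\<dots> = m x 0 + m 0 y"
    using assms unfolding interchange_near_ring_def by blast
  finally show ?thesis .
qed

(* An annihilator a satisfies a = a \<bullet> a = a \<bullet> 0 + 0 \<bullet> a = a + a, hence a = 0. *)
lemma annihilator_eq_zero:
  fixes m :: "'a::group_add \<Rightarrow> 'a \<Rightarrow> 'a"
  assumes "interchange_near_ring m" and "annihilator m a"
  shows "a = 0"
proof -
  have ann: "\<And>x. m a x = a" "\<And>x. m x a = a"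
    using assms(2) unfolding annihilator_def by auto
  have "a + 0 = m a a" using ann by simp
  also have "\<dots> = m a 0 + m 0 a" using interchange_split[OF assms(1)] .
  also have "\<dots> = a + a" using ann by simp
  finally show "a = 0" by (rule add_left_imp_eq[symmetric])
qed

(* If 0 annihilates, then x \<bullet> y = x \<bullet> 0 + 0 \<bullet> y = 0 + 0. *)
lemma zero_annihilator_imp_zero_product:
  fixes m :: "'a::group_add \<Rightarrow> 'a \<Rightarrow> 'a"
  assumes "interchange_near_ring m" and "annihilator m 0"
  shows "m x y = 0"
  using interchange_split[OF assms(1), of x y] assms(2)
  unfolding annihilator_def by simp

lemma zero_product_imp_zero_semigroup:
  fixes m :: "'a::zero \<Rightarrow> 'a \<Rightarrow> 'a"
  assumes "\<And>x y. m x y = 0"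
  shows "zero_semigroup m"
  unfolding zero_semigroup_def by (simp add: assms)

theorem proposition2p3:
  fixes m :: "'a::group_add \<Rightarrow> 'a \<Rightarrow> 'a"
  assumes "interchange_near_ring m"
    and "\<exists>a. \<forall>x. m a x = a \<and> m x a = a"
  shows "zero_semigroup m \<and> (\<forall>x y. m x y = 0)"
proof -
  obtain a where "annihilator m a"
    using assms(2) unfolding annihilator_def by blast
  moreover from assms(1) this have "a = 0" by (rule annihilator_eq_zero)
  ultimately have zero: "\<And>x y. m x y = 0"
    using assms(1) zero_annihilator_imp_zero_product by blast
  then show ?thesis using zero_product_imp_zero_semigroup by blast
qed

end
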